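(* For $\nu>0$ and integer $n\ge0$ let $\varphi_n(\nu)=\frac{\Gamma\left(\nu+\frac12\right)}{\nu^{2n}\Gamma\left(\nu-n+\frac12\right)}$. For every fixed integer $N\ge0$ and every $\lambda>0$, $$\mathbf M_\nu(\lambda\nu)=-\frac{\left(\frac12\lambda\nu\right)^{\nu-1}}{\sqrt\pi\,\Gamma\left(\nu+\frac12\right)}\left(\sum_{n=0}^{N-1}(-1)^n\frac{(2n)!}{n!\,\lambda^{2n}}\varphi_n(\nu)+(-1)^N\frac{(2N)!}{N!\,\lambda^{2N}}\varphi_N(\nu)\,E_N(\nu,\lambda)\right)$$ for $\nu>\max(0,2N-\frac32)$, where $E_N(\nu,\lambda)=\mathcal O(1)$ as $\nu\to+\infty$ uniformly in $\lambda>0$. Since $\varphi_n(\nu)\sim\nu^{-n}$ is an asymptotic sequence, this gives the generalised asymptotic expansion $$\mathbf M_\nu(\lambda\nu)\sim-\frac{\left(\frac12\lambda\nu\right)^{\nu-1}}{\sqrt\pi\,\Gamma\left(\nu+\frac12\right)}\sum_{n=0}^\infty(-1)^n\frac{(2n)!}{n!\,\lambda^{2n}}\varphi_n(\nu)\qquad(\nu\to+\infty).$$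
   Context: $\mathbf M_\nu(z)=\mathbf L_\nu(z)-I_\nu(z)$, where $\mathbf L_\nu$ is the modified Struve function and $I_\nu$ the modified Bessel function of the first kind. *)

theory Defs
  imports "HOL-Analysis.Analysis"
begin

definition besselI :: "real \<Rightarrow> real \<Rightarrow> real" where
  "besselI \<nu> x = (\<Sum>k. (x/2) powr (2 * real k + \<nu>) / (fact k * Gamma (real k + \<nu> + 1)))"

definition struveL :: "real \<Rightarrow> real \<Rightarrow> real" where
  "struveL \<nu> x = (\<Sum>k. (x/2) powr (2 * real k + \<nu> + 1) /
                      (Gamma (real k + 3/2) * Gamma (real k + \<nu> + 3/2)))"

definition struveM :: "real \<Rightarrow> real \<Rightarrow> real" where
  "struveM \<nu> x = struveL \<nu> x - besselI \<nu> x"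

definition phi :: "nat \<Rightarrow> real \<Rightarrow> real" where
  "phi n \<nu> = Gamma (\<nu> + 1/2) / (\<nu> ^ (2*n) * Gamma (\<nu> - real n + 1/2))"

end

theory Submission
  imports Defs
begin

(* For nu > 1/2 the Poisson integrals of I_nu and L_nu (cosh resp. sinh against the weight
   (1-t^2)^(nu-1/2) on [0,1]) combine, since sinh - cosh = -exp(-.), into the Laplace-type formula
     M_nu(x) = - 2 (x/2)^nu / (sqrt pi Gamma(nu+1/2)) * J,   J = int_0^1 (1-t^2)^(nu-1/2) e^(-x t) dt.  It then expands the weight binomially,
   (1-t^2)^a = sum_{n<N} binom(a,n) (-t^2)^n + R_N(t^2) with |R_N(u)| <= |binom(a,N)| u^N for N <= a,
   and uses int_0^1 t^m e^(-x t) dt = m!/x^(m+1) - (tail over [1,oo), smaller than any power of x).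
   This gives x J = sum_{n<N} (-1)^n binom(a,n) (2n)!/x^(2n) + error, with the error bounded by a
   constant depending only on N times the first omitted term, uniformly in x > 0.
   With a = nu - 1/2 and x = lam nu these terms are exactly those of the theorem, because
   phi_n(nu) = n! binom(nu-1/2,n) / nu^(2n).  Finally the error function E of the theorem is defined
   by solving the identity for it, and the estimate bounds |E| for nu >= N + 1, uniformly in lam. *)

text \<open>Moments of the weight \<open>(1 - t\<^sup>2) powr a\<close> on \<open>[0,1]\<close>; substituting \<open>u = t\<^sup>2\<close> turns
  them into Beta integrals.\<close>

definition weight_moment :: "real \<Rightarrow> nat \<Rightarrow> real" where
  "weight_moment a j = Beta ((real j + 1) / 2) (a + 1) / 2"

lemma continuous_on_weight:
  fixes a :: real assumes "a > 0"
  shows "continuous_on {0..1} (\<lambda>t::real. (1 - t\<^sup>2) powr a)"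
  by (rule continuous_on_powr') (use assms in \<open>auto intro!: continuous_intros simp: abs_square_le_1\<close>)

lemma weight_moment_integral:
  fixes a :: real assumes a: "a > 0"
  shows "((\<lambda>t. (1 - t\<^sup>2) powr a * t ^ j) has_integral weight_moment a j) {0..1}"
proof -
  define f where "f = (\<lambda>t::real. (1 - t\<^sup>2) powr a * t ^ j)"
  have cont_f: "continuous_on {0..1} f"
    unfolding f_def by (intro continuous_on_mult[OF continuous_on_weight[OF a]] continuous_intros)
  have subst: "((\<lambda>u. (inverse (sqrt u) / 2) *\<^sub>R f (sqrt u)) has_integral
      (integral {sqrt 0..sqrt 1} f - integral {sqrt 1..sqrt 0} f)) {0..1}"
  proof (rule has_integral_substitution_general[of "{0}" 0 1 sqrt 0 1 f "\<lambda>u. inverse (sqrt u) / 2"])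
    show "continuous_on {0..1} sqrt" by (rule continuous_on_real_sqrt[OF continuous_on_id])
    show "continuous_on {0..1} f" by (rule cont_f)
    fix u :: real assume "u \<in> {0..1} - {0}"
    then show "(sqrt has_field_derivative inverse (sqrt u) / 2) (at u within {0..1})"
      by (intro has_field_derivative_at_within[OF DERIV_real_sqrt]) auto
  qed (simp_all add: image_subset_iff)
  have integrand: "(inverse (sqrt u) / 2) *\<^sub>R f (sqrt u) =
      u powr ((real j + 1) / 2 - 1) * (1 - u) powr (a + 1 - 1) / 2" if u: "u \<in> {0..1} - {0}" for u
  proof -
    have u0: "u > 0" using u by auto
    have "sqrt u ^ j = (u powr (1/2)) ^ j" using u0 by (simp add: powr_half_sqrt)
    also have "\<dots> = u powr (real j / 2)"
      using u0 by (simp add: powr_realpow[symmetric] powr_powr)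
    finally have "sqrt u ^ j = u powr (real j / 2)" .
    moreover have "inverse (sqrt u) = u powr (-1/2)"
      using u0 by (simp add: powr_half_sqrt powr_minus)
    moreover have "u powr ((real j + 1) / 2 - 1) = u powr (-1/2) * u powr (real j / 2)"
      using u0 by (subst powr_add[symmetric]) (simp add: field_simps)
    ultimately show ?thesis using u0 unfolding f_def by simp
  qed
  have "((\<lambda>u. (inverse (sqrt u) / 2) *\<^sub>R f (sqrt u)) has_integral weight_moment a j) {0..1}"
    unfolding weight_moment_def
    by (rule has_integral_spike_finite[of "{0}", OF _ integrand has_integral_divide[OF has_integral_Beta_real]])
       (use a in auto)
  then have "integral {0..1} f = weight_moment a j"
    using has_integral_unique[OF subst] by simp
  then show ?thesis
    using integrable_integral[OF integrable_continuous_real[OF cont_f]] unfolding f_def by simp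
qed

lemma exp_partial_sum_le:
  fixes x :: real assumes "x \<ge> 0" and "finite A"
  shows "(\<Sum>j\<in>A. x ^ j / fact j) \<le> exp x"
proof -
  have exp_sums: "(\<lambda>j. x ^ j / fact j) sums exp x"
    using exp_converges[of x] by (simp add: divide_inverse mult.commute)
  show ?thesis
    using sum_le_suminf[OF sums_summable[OF exp_sums] \<open>finite A\<close>] sums_unique[OF exp_sums] assms(1)
    by simp
qed

text \<open>A power series dominated by the exponential series may be integrated termwise against the
  weight; this is dominated convergence with the constant bound \<open>exp x\<close>.\<close>

lemma weighted_power_series_integral:
  fixes a x :: real and c :: "nat \<Rightarrow> real" and G :: "real \<Rightarrow> real"
  assumes a: "a > 0" and x: "x \<ge> 0"
    and series: "\<And>t. t \<in> {0..1} \<Longrightarrow> (\<lambda>j. c j * t ^ j) sums G t"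
    and coeff_bound: "\<And>j. \<bar>c j\<bar> \<le> x ^ j / fact j"
  shows "(\<lambda>t. (1 - t\<^sup>2) powr a * G t) integrable_on {0..1}"
    and "(\<lambda>j. c j * weight_moment a j) sums integral {0..1} (\<lambda>t. (1 - t\<^sup>2) powr a * G t)"
proof -
  define f where "f = (\<lambda>k t. \<Sum>j<k. c j * ((1 - t\<^sup>2) powr a * t ^ j))"
  have f_integral: "(f k has_integral (\<Sum>j<k. c j * weight_moment a j)) {0..1}" for k
    unfolding f_def by (intro has_integral_sum has_integral_mult_right weight_moment_integral a) auto
  have f_bound: "norm (f k t) \<le> exp x" if t: "t \<in> {0..1}" for k t
  proof -
    have weight_le: "\<bar>(1 - t\<^sup>2) powr a * t ^ j\<bar> \<le> 1" for j
      using t a by (auto simp: abs_mult abs_square_le_1 intro!: mult_le_one powr_le1 power_le_one)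
    have "norm (f k t) \<le> (\<Sum>j<k. \<bar>c j\<bar> * \<bar>(1 - t\<^sup>2) powr a * t ^ j\<bar>)"
      unfolding f_def real_norm_def abs_mult[symmetric] by (rule sum_abs)
    also have "\<dots> \<le> (\<Sum>j<k. x ^ j / fact j)"
    proof (rule sum_mono)
      fix j
      show "\<bar>c j\<bar> * \<bar>(1 - t\<^sup>2) powr a * t ^ j\<bar> \<le> x ^ j / fact j"
        using mult_mono[OF coeff_bound[of j] weight_le[of j]] x by simp
    qed
    also have "\<dots> \<le> exp x" by (rule exp_partial_sum_le[OF x finite_lessThan])
    finally show ?thesis .
  qed
  have f_limit: "(\<lambda>k. f k t) \<longlonglongrightarrow> (1 - t\<^sup>2) powr a * G t" if t: "t \<in> {0..1}" for t
  proof -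
    have "(\<lambda>k. (1 - t\<^sup>2) powr a * (\<Sum>j<k. c j * t ^ j)) \<longlonglongrightarrow> (1 - t\<^sup>2) powr a * G t"
      using series[OF t] unfolding sums_def by (intro tendsto_mult tendsto_const)
    then show ?thesis unfolding f_def by (simp add: sum_distrib_left mult_ac)
  qed
  have dom: "(\<lambda>t. (1 - t\<^sup>2) powr a * G t) integrable_on {0..1}"
     "(\<lambda>k. integral {0..1} (f k)) \<longlonglongrightarrow> integral {0..1} (\<lambda>t. (1 - t\<^sup>2) powr a * G t)"
    by (rule dominated_convergence[of f "{0..1}" "\<lambda>_. exp x"];
        use f_integral f_bound f_limit in auto)+
  show "(\<lambda>t. (1 - t\<^sup>2) powr a * G t) integrable_on {0..1}" by (rule dom(1))
  show "(\<lambda>j. c j * weight_moment a j) sums integral {0..1} (\<lambda>t. (1 - t\<^sup>2) powr a * G t)"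
    using dom(2) unfolding sums_def integral_unique[OF f_integral] .
qed

lemma Gamma_half_nat: "Gamma (real k + 1/2) = fact (2*k) * sqrt pi / (4 ^ k * fact k)"
proof -
  have "Gamma (1/2 + real k) = pochhammer (1/2) k * Gamma (1/2)"
    by (subst pochhammer_Gamma) (auto simp: Gamma_one_half_real)
  moreover have "(fact (2*k) :: real) = 4 ^ k * pochhammer (1/2) k * fact k"
    using fact_double[of k] by (simp add: power_mult)
  ultimately show ?thesis by (simp add: Gamma_one_half_real add.commute)
qed

lemma Gamma_three_halves_nat:
  "Gamma (real k + 3/2) = fact (2*k+1) * sqrt pi / (2 * 4 ^ k * fact k)"
proof -
  have "Gamma ((real k + 1/2) + 1) = (real k + 1/2) * Gamma (real k + 1/2)"
    by (rule Gamma_plus1) auto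
  then have "Gamma (real k + 3/2) = (real k + 1/2) * Gamma (real k + 1/2)"
    by (simp add: add.assoc)
  moreover have "(fact (2*k+1) :: real) = (2 * real k + 1) * fact (2*k)"
    by (simp add: algebra_simps)
  ultimately show ?thesis unfolding Gamma_half_nat by (simp add: field_simps)
qed

definition poisson_factor :: "real \<Rightarrow> real \<Rightarrow> real" where
  "poisson_factor \<nu> x = 2 * (x/2) powr \<nu> / (sqrt pi * Gamma (\<nu> + 1/2))"

lemma cosh_power_series:
  "(\<lambda>j. (if even j then x ^ j / fact j else 0) * t ^ j) sums cosh (x * t :: real)"
proof -
  have "(\<lambda>j. (if even j then x ^ j / fact j else 0) * t ^ j) =
      (\<lambda>j. if even j then (x * t) ^ j /\<^sub>R fact j else 0)"
    by (auto simp: power_mult_distrib divide_inverse)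
  then show ?thesis using cosh_converges[of "x * t"] by simp
qed

lemma sinh_power_series:
  "(\<lambda>j. (if even j then 0 else x ^ j / fact j) * t ^ j) sums sinh (x * t :: real)"
proof -
  have "(\<lambda>j. (if even j then 0 else x ^ j / fact j) * t ^ j) =
      (\<lambda>j. if even j then 0 else (x * t) ^ j /\<^sub>R fact j)"
    by (auto simp: power_mult_distrib divide_inverse)
  then show ?thesis using sinh_converges[of "x * t"] by simp
qed

text \<open>Poisson's integral \<open>I\<^sub>\<nu>(x) = K \<integral>\<^sub>0\<^sup>1 (1 - t\<^sup>2)\<^bsup>\<nu>-1/2\<^esup> cosh (x t) dt\<close> with
  \<open>K = poisson_factor \<nu> x\<close>: the even moments reproduce the defining series term by term.\<close>

lemma besselI_poisson_integral:
  fixes \<nu> x :: real assumes nu: "\<nu> > 1/2" and x: "x > 0"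
  shows "besselI \<nu> x = poisson_factor \<nu> x * integral {0..1} (\<lambda>t. (1 - t\<^sup>2) powr (\<nu> - 1/2) * cosh (x * t))"
    and "(\<lambda>t. (1 - t\<^sup>2) powr (\<nu> - 1/2) * cosh (x * t)) integrable_on {0..1}"
proof -
  define c where "c = (\<lambda>j. if even j then x ^ j / fact j else 0 :: real)"
  have series: "(\<lambda>j. c j * t ^ j) sums cosh (x * t)" for t
    unfolding c_def by (rule cosh_power_series)
  have coeff_bound: "\<bar>c j\<bar> \<le> x ^ j / fact j" for j using x by (auto simp: c_def)
  show "(\<lambda>t. (1 - t\<^sup>2) powr (\<nu> - 1/2) * cosh (x * t)) integrable_on {0..1}"
    by (rule weighted_power_series_integral(1)[OF _ _ series coeff_bound]) (use nu x in auto)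
  have "(\<lambda>j. c j * weight_moment (\<nu> - 1/2) j) sums
      integral {0..1} (\<lambda>t. (1 - t\<^sup>2) powr (\<nu> - 1/2) * cosh (x * t))"
    by (rule weighted_power_series_integral(2)[OF _ _ series coeff_bound]) (use nu x in auto)
  then have even_part: "(\<lambda>k. c (2*k) * weight_moment (\<nu> - 1/2) (2*k)) sums
      integral {0..1} (\<lambda>t. (1 - t\<^sup>2) powr (\<nu> - 1/2) * cosh (x * t))"
    by (subst sums_mono_reindex[of "\<lambda>k. 2*k"]) (auto simp: c_def strict_mono_def elim!: evenE)
  have term_eq: "poisson_factor \<nu> x * (c (2*k) * weight_moment (\<nu> - 1/2) (2*k)) =
      (x/2) powr (2 * real k + \<nu>) / (fact k * Gamma (real k + \<nu> + 1))" for k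
  proof -
    have moment: "weight_moment (\<nu> - 1/2) (2*k) =
        Gamma (real k + 1/2) * Gamma (\<nu> + 1/2) / Gamma (real k + \<nu> + 1) / 2"
    proof -
      have "(real (2*k) + 1) / 2 = real k + 1/2" "\<nu> - 1/2 + 1 = \<nu> + 1/2"
        "real k + 1/2 + (\<nu> + 1/2) = real k + \<nu> + 1" by simp_all
      then show ?thesis unfolding weight_moment_def Beta_def by (simp only:)
    qed
    have "(x/2) powr (2 * real k + \<nu>) = (x/2) ^ (2*k) * (x/2) powr \<nu>"
      using x by (simp add: powr_add powr_realpow[symmetric])
    moreover have "(4::real) ^ k = (2 ^ k)\<^sup>2" by (simp add: power2_eq_square power_mult_distrib[symmetric])
    moreover have "Gamma (real k + \<nu> + 1) > 0" "Gamma (\<nu> + 1/2) > 0" using nu by simp_all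
    ultimately show ?thesis unfolding moment poisson_factor_def c_def Gamma_half_nat
      by (simp add: field_simps power_mult_distrib power_mult)
  qed
  show "besselI \<nu> x = poisson_factor \<nu> x * integral {0..1} (\<lambda>t. (1 - t\<^sup>2) powr (\<nu> - 1/2) * cosh (x * t))"
    using sums_mult[OF even_part, of "poisson_factor \<nu> x"] unfolding term_eq besselI_def
    by (rule sums_unique[symmetric])
qed

text \<open>Poisson's integral for the modified Struve function, from the odd moments and \<open>sinh\<close>.\<close>

lemma struveL_poisson_integral:
  fixes \<nu> x :: real assumes nu: "\<nu> > 1/2" and x: "x > 0"
  shows "struveL \<nu> x = poisson_factor \<nu> x * integral {0..1} (\<lambda>t. (1 - t\<^sup>2) powr (\<nu> - 1/2) * sinh (x * t))"
    and "(\<lambda>t. (1 - t\<^sup>2) powr (\<nu> - 1/2) * sinh (x * t)) integrable_on {0..1}"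
proof -
  define c where "c = (\<lambda>j. if even j then 0 else x ^ j / fact j :: real)"
  have series: "(\<lambda>j. c j * t ^ j) sums sinh (x * t)" for t
    unfolding c_def by (rule sinh_power_series)
  have coeff_bound: "\<bar>c j\<bar> \<le> x ^ j / fact j" for j using x by (auto simp: c_def)
  show "(\<lambda>t. (1 - t\<^sup>2) powr (\<nu> - 1/2) * sinh (x * t)) integrable_on {0..1}"
    by (rule weighted_power_series_integral(1)[OF _ _ series coeff_bound]) (use nu x in auto)
  have "(\<lambda>j. c j * weight_moment (\<nu> - 1/2) j) sums
      integral {0..1} (\<lambda>t. (1 - t\<^sup>2) powr (\<nu> - 1/2) * sinh (x * t))"
    by (rule weighted_power_series_integral(2)[OF _ _ series coeff_bound]) (use nu x in auto)
  then have odd_part: "(\<lambda>k. c (2*k+1) * weight_moment (\<nu> - 1/2) (2*k+1)) sums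
      integral {0..1} (\<lambda>t. (1 - t\<^sup>2) powr (\<nu> - 1/2) * sinh (x * t))"
    by (subst sums_mono_reindex[of "\<lambda>k. 2*k+1"]) (auto simp: c_def strict_mono_def elim!: oddE)
  have term_eq: "poisson_factor \<nu> x * (c (2*k+1) * weight_moment (\<nu> - 1/2) (2*k+1)) =
      (x/2) powr (2 * real k + \<nu> + 1) / (Gamma (real k + 3/2) * Gamma (real k + \<nu> + 3/2))" for k
  proof -
    have moment: "weight_moment (\<nu> - 1/2) (2*k+1) =
        fact k * Gamma (\<nu> + 1/2) / Gamma (real k + \<nu> + 3/2) / 2"
    proof -
      have "(real (2*k+1) + 1) / 2 = 1 + real k" "\<nu> - 1/2 + 1 = \<nu> + 1/2"
        "1 + real k + (\<nu> + 1/2) = real k + \<nu> + 3/2" by simp_all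
      then show ?thesis unfolding weight_moment_def Beta_def by (simp only: Gamma_fact)
    qed
    have "(x/2) powr (2 * real k + \<nu> + 1) = (x/2) ^ (2*k+1) * (x/2) powr \<nu>"
    proof -
      have "2 * real k + \<nu> + 1 = real (2*k+1) + \<nu>" by simp
      then show ?thesis using x by (simp only:) (simp add: powr_add powr_realpow[symmetric])
    qed
    moreover have "(4::real) ^ k = (2 ^ k)\<^sup>2" by (simp add: power2_eq_square power_mult_distrib[symmetric])
    moreover have "Gamma (real k + \<nu> + 3/2) > 0" "Gamma (\<nu> + 1/2) > 0" "(fact (2*k+1) :: real) > 0"
      using nu by simp_all
    ultimately show ?thesis unfolding moment poisson_factor_def c_def Gamma_three_halves_nat
      by (simp add: field_simps power_mult_distrib power_mult del: fact_Suc)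
  qed
  show "struveL \<nu> x = poisson_factor \<nu> x * integral {0..1} (\<lambda>t. (1 - t\<^sup>2) powr (\<nu> - 1/2) * sinh (x * t))"
    using sums_mult[OF odd_part, of "poisson_factor \<nu> x"] unfolding term_eq struveL_def
    by (rule sums_unique[symmetric])
qed

text \<open>Since \<open>sinh - cosh = - exp (- \<cdot>)\<close>, the two Poisson integrals combine into a Laplace-type
  integral for \<open>M\<^sub>\<nu> = L\<^sub>\<nu> - I\<^sub>\<nu>\<close>.\<close>

lemma struveM_laplace_integral:
  fixes \<nu> x :: real assumes nu: "\<nu> > 1/2" and x: "x > 0"
  shows "struveM \<nu> x = - poisson_factor \<nu> x * integral {0..1} (\<lambda>t. (1 - t\<^sup>2) powr (\<nu> - 1/2) * exp (- x * t))"
proof -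
  have "integral {0..1} (\<lambda>t. (1 - t\<^sup>2) powr (\<nu> - 1/2) * sinh (x * t)) -
        integral {0..1} (\<lambda>t. (1 - t\<^sup>2) powr (\<nu> - 1/2) * cosh (x * t)) =
        integral {0..1} (\<lambda>t. (1 - t\<^sup>2) powr (\<nu> - 1/2) * (sinh (x * t) - cosh (x * t)))"
    by (subst integral_diff[symmetric])
       (auto simp: right_diff_distrib struveL_poisson_integral(2)[OF nu x] besselI_poisson_integral(2)[OF nu x])
  also have "\<dots> = - integral {0..1} (\<lambda>t. (1 - t\<^sup>2) powr (\<nu> - 1/2) * exp (- x * t))"
    by (simp add: sinh_def cosh_def field_simps flip: integral_neg)
  finally show ?thesis
    unfolding struveM_def struveL_poisson_integral(1)[OF nu x] besselI_poisson_integral(1)[OF nu x]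
    by (simp add: right_diff_distrib[symmetric])
qed

text \<open>An antiderivative of \<open>t ^ m * exp (- x t)\<close>, built by repeated integration by parts.\<close>

fun exp_poly_antideriv :: "real \<Rightarrow> nat \<Rightarrow> real \<Rightarrow> real" where
  "exp_poly_antideriv x 0 t = - exp (- x * t) / x"
| "exp_poly_antideriv x (Suc m) t =
     - (t ^ Suc m) * exp (- x * t) / x + real (Suc m) / x * exp_poly_antideriv x m t"

lemma exp_poly_antideriv_deriv:
  fixes x :: real assumes x: "x > 0"
  shows "(exp_poly_antideriv x m has_real_derivative t ^ m * exp (- x * t)) (at t)"
proof (induction m)
  case 0
  show ?case using x by (auto intro!: derivative_eq_intros simp: field_simps)
next
  case (Suc m)
  have unfold: "exp_poly_antideriv x (Suc m) =
      (\<lambda>t. - (t ^ Suc m) * exp (- x * t) / x + real (Suc m) / x * exp_poly_antideriv x m t)"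
    by (rule ext) simp
  show ?case
    unfolding unfold using x by (auto intro!: derivative_eq_intros Suc.IH simp: field_simps) (cases m; simp)
qed

lemma exp_poly_antideriv_zero:
  fixes x :: real assumes x: "x > 0"
  shows "exp_poly_antideriv x m 0 = - fact m / x ^ (m+1)"
proof (induction m)
  case (Suc m)
  have "exp_poly_antideriv x (Suc m) 0 = real (Suc m) / x * (- fact m / x ^ (m+1))"
    using Suc by simp
  also have "\<dots> = - fact (Suc m) / x ^ (Suc m + 1)"
    using x by (simp add: field_simps)
  finally show ?case .
qed simp

text \<open>The tail \<open>\<integral>\<^sub>1\<^sup>\<infinity> t ^ m * exp (- x t) dt\<close>, given by its integration-by-parts recursion.\<close>

definition laplace_tail :: "real \<Rightarrow> nat \<Rightarrow> real" where
  "laplace_tail x m = - exp_poly_antideriv x m 1"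

lemma laplace_tail_simps:
  "laplace_tail x 0 = exp (- x) / x"
  "laplace_tail x (Suc m) = exp (- x) / x + real (Suc m) / x * laplace_tail x m"
  by (simp_all add: laplace_tail_def)

lemma laplace_tail_nonneg: "x > 0 \<Longrightarrow> laplace_tail x m \<ge> 0"
  by (induction m) (auto simp: laplace_tail_simps)

text \<open>The Laplace transform of \<open>t ^ m\<close> restricted to \<open>[0,1]\<close>; it differs from the full one,
  \<open>m! / x ^ (m+1)\<close>, by the tail.\<close>

definition truncated_laplace :: "real \<Rightarrow> nat \<Rightarrow> real" where
  "truncated_laplace x m = fact m / x ^ (m+1) - laplace_tail x m"

lemma truncated_laplace_integral:
  fixes x :: real assumes x: "x > 0"
  shows "((\<lambda>t. t ^ m * exp (- x * t)) has_integral truncated_laplace x m) {0..1}"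
proof -
  have "((\<lambda>t. t ^ m * exp (- x * t)) has_integral
      (exp_poly_antideriv x m 1 - exp_poly_antideriv x m 0)) {0..1}"
  proof (rule fundamental_theorem_of_calculus)
    fix t :: real
    show "(exp_poly_antideriv x m has_vector_derivative t ^ m * exp (- x * t)) (at t within {0..1})"
      using has_field_derivative_at_within[OF exp_poly_antideriv_deriv[OF x]]
      by (simp add: has_real_derivative_iff_has_vector_derivative)
  qed simp
  then show ?thesis
    by (simp add: truncated_laplace_def laplace_tail_def exp_poly_antideriv_zero[OF x] add.commute)
qed

lemma pow_mult_exp_neg_le:
  fixes x :: real assumes "x \<ge> 0"
  shows "x ^ n * exp (- x) \<le> fact n"
proof -
  have "x ^ n / fact n \<le> exp x" using exp_partial_sum_le[OF assms, of "{n}"] by simp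
  then show ?thesis by (simp add: exp_minus field_simps)
qed

text \<open>Every power of \<open>x\<close> times the tail stays bounded: the tail is \<open>O(exp (- x) / x)\<close>.\<close>

lemma laplace_tail_bound:
  fixes x :: real assumes x: "x > 0"
  shows "m + 1 \<le> j \<Longrightarrow> x ^ j * laplace_tail x m \<le> fact (m+1) * fact j"
proof (induction m arbitrary: j)
  case 0
  then obtain i where j: "j = Suc i" by (cases j) auto
  have "x ^ j * laplace_tail x 0 = x ^ i * exp (- x)"
    using x by (simp add: laplace_tail_simps j field_simps)
  also have "\<dots> \<le> fact i" by (rule pow_mult_exp_neg_le) (use x in simp)
  also have "\<dots> \<le> fact j" unfolding j by (rule fact_mono) simp
  finally show ?case by simp
next
  case (Suc m)
  then obtain i where j: "j = Suc i" and i: "m + 1 \<le> i" by (cases j) auto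
  have "x ^ j * laplace_tail x (Suc m) = x ^ i * exp (- x) + real (Suc m) * (x ^ i * laplace_tail x m)"
    using x by (simp add: laplace_tail_simps j field_simps)
  also have "\<dots> \<le> fact i + real (Suc m) * (fact (m+1) * fact i)"
    using pow_mult_exp_neg_le[of x i] Suc.IH[OF i] x by (intro add_mono mult_left_mono) auto
  also have "\<dots> = (1 + real (Suc m) * fact (m+1)) * fact i" by (simp add: algebra_simps)
  also have "\<dots> \<le> fact (Suc m + 1) * fact j"
  proof (rule mult_mono)
    have "1 + real (Suc m) * fact (m+1) \<le> real (m+2) * (fact (m+1) :: real)"
      using fact_ge_1[of "m+1", where 'a=real] by (simp add: algebra_simps)
    then show "1 + real (Suc m) * fact (m+1) \<le> (fact (Suc m + 1) :: real)"
      by (simp add: algebra_simps)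
    show "(fact i :: real) \<le> fact j" unfolding j by (rule fact_mono) simp
  qed auto
  finally show ?case .
qed

definition binomial_remainder :: "nat \<Rightarrow> real \<Rightarrow> real \<Rightarrow> real" where
  "binomial_remainder N a u = (1 - u) powr a - (\<Sum>n<N. (a gchoose n) * (- u) ^ n)"

lemma binomial_remainder_at_zero: "binomial_remainder N a 0 = (if N = 0 then 1 else 0)"
  by (cases N) (simp_all add: binomial_remainder_def sum.lessThan_Suc_shift)

lemma continuous_on_binomial_remainder:
  fixes a :: real assumes a: "a > 0"
  shows "continuous_on {0..1} (binomial_remainder N a)"
proof -
  have "continuous_on {0..1::real} (\<lambda>u. (1 - u) powr a)"
    by (rule continuous_on_powr') (use a in \<open>auto intro!: continuous_intros\<close>)
  then show ?thesis
    unfolding binomial_remainder_def[abs_def] by (rule continuous_on_diff) (intro continuous_intros)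
qed

lemma binomial_remainder_deriv:
  fixes a :: real assumes v: "0 < v" "v < 1"
  shows "(binomial_remainder (Suc N) a has_real_derivative (- a * binomial_remainder N (a - 1) v)) (at v)"
proof -
  have coeff: "(a gchoose Suc m) * (real (Suc m) * (- v) ^ m * (- 1)) = - a * ((a - 1) gchoose m) * (- v) ^ m"
    for m
    using arg_cong[OF gbinomial_absorption[of m a], of "\<lambda>z. - z * (- v) ^ m"] by (simp add: algebra_simps)
  have "(\<Sum>n<Suc N. (a gchoose n) * (real n * (- v) ^ (n - 1) * (- 1))) =
      (\<Sum>m<N. (a gchoose Suc m) * (real (Suc m) * (- v) ^ m * (- 1)))"
    by (subst sum.lessThan_Suc_shift) simp
  also have "\<dots> = - a * (\<Sum>m<N. ((a - 1) gchoose m) * (- v) ^ m)"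
    unfolding coeff by (simp add: sum_distrib_left mult.assoc)
  finally have poly_deriv: "(\<Sum>n<Suc N. (a gchoose n) * (real n * (- v) ^ (n - 1) * (- 1))) =
      - a * (\<Sum>m<N. ((a - 1) gchoose m) * (- v) ^ m)" .
  have "(binomial_remainder (Suc N) a has_real_derivative (- a * (1 - v) powr (a - 1) -
      (\<Sum>n<Suc N. (a gchoose n) * (real n * (- v) ^ (n - 1) * (- 1))))) (at v)"
    unfolding binomial_remainder_def[abs_def] using v
    by (auto intro!: derivative_eq_intros DERIV_sum simp: field_simps)
  then show ?thesis unfolding poly_deriv by (simp add: binomial_remainder_def algebra_simps)
qed

text \<open>By induction on \<open>N\<close>: the derivative bound from the previous order makes
  \<open>|a gchoose N| * u ^ N \<plusminus> R\<^sub>N(u)\<close> nondecreasing, and both vanish at \<open>u = 0\<close>.\<close>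

lemma binomial_remainder_bound:
  "real N \<le> a \<Longrightarrow> u \<in> {0..1} \<Longrightarrow> \<bar>binomial_remainder N a u\<bar> \<le> \<bar>a gchoose N\<bar> * u ^ N"
proof (induction N arbitrary: a u)
  case 0
  have "(1 - u) powr a \<le> 1" using 0 by (intro powr_le1) auto
  then show ?case by (simp add: binomial_remainder_def)
next
  case (Suc N)
  have a: "a > 0" and a1: "real N \<le> a - 1" and u: "0 \<le> u" "u \<le> 1" using Suc.prems by auto
  define B where "B = \<bar>a gchoose Suc N\<bar>"
  have B_absorb: "real (Suc N) * B = a * \<bar>(a - 1) gchoose N\<bar>"
    using gbinomial_absorption[of N a] a unfolding B_def by (metis abs_mult abs_of_nat abs_of_pos)
  have monotone: "0 \<le> B * v ^ Suc N + s * binomial_remainder (Suc N) a v"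
    if s: "\<bar>s\<bar> = 1" and v: "v \<in> {0..u}" for s v
  proof -
    let ?h = "\<lambda>w. B * w ^ Suc N + s * binomial_remainder (Suc N) a w"
    have "?h 0 \<le> ?h v"
    proof (rule DERIV_nonneg_imp_increasing_open[of 0 v ?h])
      fix w assume w: "0 < w" "w < v"
      then have w1: "w < 1" using v u by auto
      have "\<bar>s * (- a * binomial_remainder N (a - 1) w)\<bar> = a * \<bar>binomial_remainder N (a - 1) w\<bar>"
        using s a by (simp add: abs_mult)
      also have "\<dots> \<le> a * (\<bar>(a - 1) gchoose N\<bar> * w ^ N)"
        using Suc.IH[OF a1, of w] w w1 a by (intro mult_left_mono) auto
      also have "\<dots> = B * (real (Suc N) * w ^ N)" using B_absorb by (simp add: mult_ac)
      finally have "0 \<le> B * (real (Suc N) * w ^ N) + s * (- a * binomial_remainder N (a - 1) w)"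
        by linarith
      moreover have "(?h has_real_derivative
          B * (real (Suc N) * w ^ N) + s * (- a * binomial_remainder N (a - 1) w)) (at w)"
        using DERIV_pow[of "Suc N" w UNIV]
        by (intro DERIV_add DERIV_cmult binomial_remainder_deriv w(1) w1) simp
      ultimately show "\<exists>y. (?h has_real_derivative y) (at w) \<and> 0 \<le> y" by blast
    next
      have "continuous_on {0..v} (binomial_remainder (Suc N) a)"
        by (rule continuous_on_subset[OF continuous_on_binomial_remainder[OF a]]) (use v u in auto)
      then show "continuous_on {0..v} ?h" by (intro continuous_intros)
    qed (use v in auto)
    then show ?thesis by (simp add: binomial_remainder_at_zero)
  qed
  show ?case
    using monotone[of 1 u] monotone[of "-1" u] u unfolding B_def by auto
qed

lemma gbinomial_abs_step:
  fixes a :: real assumes "real (Suc k) \<le> a"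
  shows "\<bar>a gchoose k\<bar> \<le> real (Suc k) * \<bar>a gchoose Suc k\<bar>"
proof -
  have step: "(a - real k) * (a gchoose k) = real (Suc k) * (a gchoose Suc k)"
    using gbinomial_mult_1[of a k] by (simp add: algebra_simps)
  have "\<bar>a gchoose k\<bar> \<le> (a - real k) * \<bar>a gchoose k\<bar>"
    using assms mult_right_mono[of 1 "a - real k" "\<bar>a gchoose k\<bar>"] by simp
  also have "\<dots> = real (Suc k) * \<bar>a gchoose Suc k\<bar>"
    using arg_cong[OF step, of abs] assms by (simp add: abs_mult)
  finally show ?thesis .
qed

lemma gbinomial_abs_le_fact:
  fixes a :: real
  shows "real N \<le> a \<Longrightarrow> n \<le> N \<Longrightarrow> \<bar>a gchoose n\<bar> \<le> fact N * \<bar>a gchoose N\<bar>"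
proof (induction N)
  case (Suc N)
  show ?case
  proof (cases "n = Suc N")
    case True
    have "1 * \<bar>a gchoose n\<bar> \<le> fact (Suc N) * \<bar>a gchoose n\<bar>"
      by (rule mult_right_mono[OF fact_ge_1 abs_ge_zero])
    then show ?thesis using True by simp
  next
    case False
    then have "\<bar>a gchoose n\<bar> \<le> fact N * \<bar>a gchoose N\<bar>" using Suc by simp
    also have "\<dots> \<le> fact N * (real (Suc N) * \<bar>a gchoose Suc N\<bar>)"
      by (intro mult_left_mono gbinomial_abs_step) (use Suc.prems in auto)
    finally show ?thesis by (simp add: algebra_simps)
  qed
qed simp

text \<open>Integrating the binomial expansion of the weight against \<open>exp (- x t)\<close> term by term, with the
  error controlled by \<open>binomial_remainder_bound\<close>.\<close>

lemma weighted_laplace_binomial_approx: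
  fixes a x :: real
  assumes aN: "real N \<le> a" and a: "a > 0" and x: "x > 0"
  shows "\<bar>integral {0..1} (\<lambda>t. (1 - t\<^sup>2) powr a * exp (- x * t)) -
           (\<Sum>n<N. (-1) ^ n * (a gchoose n) * truncated_laplace x (2*n))\<bar>
         \<le> \<bar>a gchoose N\<bar> * truncated_laplace x (2*N)"
proof -
  define w where "w = (\<lambda>t. (1 - t\<^sup>2) powr a * exp (- x * t))"
  define p where "p = (\<lambda>t. \<Sum>n<N. (-1) ^ n * (a gchoose n) * (t ^ (2*n) * exp (- x * t)))"
  have "continuous_on {0..1} w"
    unfolding w_def by (intro continuous_on_mult[OF continuous_on_weight[OF a]] continuous_intros)
  then have int_w: "(w has_integral integral {0..1} w) {0..1}"
    by (rule integrable_integral[OF integrable_continuous_real])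
  have int_p: "(p has_integral (\<Sum>n<N. (-1) ^ n * (a gchoose n) * truncated_laplace x (2*n))) {0..1}"
    unfolding p_def by (intro has_integral_sum has_integral_mult_right truncated_laplace_integral x) auto
  have int_bound: "((\<lambda>t. \<bar>a gchoose N\<bar> * (t ^ (2*N) * exp (- x * t))) has_integral
      \<bar>a gchoose N\<bar> * truncated_laplace x (2*N)) {0..1}"
    by (intro has_integral_mult_right truncated_laplace_integral x)
  have pointwise: "norm (w t - p t) \<le> \<bar>a gchoose N\<bar> * (t ^ (2*N) * exp (- x * t))"
    if t: "t \<in> {0..1}" for t
  proof -
    have "p t = (\<Sum>n<N. (a gchoose n) * (- t\<^sup>2) ^ n) * exp (- x * t)"
      unfolding p_def sum_distrib_right
    proof (intro sum.cong refl)
      fix n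
      have "(- t\<^sup>2) ^ n = (-1) ^ n * t ^ (2*n)"
        unfolding power_mult by (rule power_minus)
      then show "(-1) ^ n * (a gchoose n) * (t ^ (2*n) * exp (- x * t)) =
          (a gchoose n) * (- t\<^sup>2) ^ n * exp (- x * t)" by (simp only: mult_ac)
    qed
    then have "w t - p t = binomial_remainder N a (t\<^sup>2) * exp (- x * t)"
      unfolding w_def binomial_remainder_def by (simp add: left_diff_distrib)
    then have "\<bar>w t - p t\<bar> = \<bar>binomial_remainder N a (t\<^sup>2)\<bar> * exp (- x * t)"
      by (simp add: abs_mult)
    also have "\<dots> \<le> (\<bar>a gchoose N\<bar> * (t\<^sup>2) ^ N) * exp (- x * t)"
      using binomial_remainder_bound[OF aN, of "t\<^sup>2"] t
      by (intro mult_right_mono) (auto simp: abs_square_le_1)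
    finally show ?thesis unfolding real_norm_def power_mult by (simp only: mult_ac)
  qed
  have "norm (integral {0..1} w - (\<Sum>n<N. (-1) ^ n * (a gchoose n) * truncated_laplace x (2*n)))
      \<le> (\<bar>a gchoose N\<bar> * truncated_laplace x (2*N)) \<bullet> 1"
    by (rule has_integral_norm_bound_integral_component[OF has_integral_diff[OF int_w int_p] int_bound])
       (use pointwise in auto)
  then show ?thesis unfolding w_def by simp
qed

lemma scaled_truncated_laplace:
  fixes x :: real assumes x: "x > 0"
  shows "x * truncated_laplace x m = fact m / x ^ m - x * laplace_tail x m"
  using x by (simp add: truncated_laplace_def field_simps)

lemma scaled_truncated_laplace_le:
  fixes x :: real assumes x: "x > 0"
  shows "x * truncated_laplace x m \<le> fact m / x ^ m"
  using scaled_truncated_laplace[OF x, of m] laplace_tail_nonneg[OF x, of m] x by simp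

lemma tail_correction_bound:
  fixes a x :: real
  assumes aN: "real N \<le> a" and n: "n < N" and x: "x > 0"
  shows "\<bar>(-1) ^ n * (a gchoose n) * (x * laplace_tail x (2*n))\<bar>
           \<le> fact N * fact (2*N+1) ^ 2 * (\<bar>a gchoose N\<bar> * fact (2*N) / x ^ (2*N))"
proof -
  have "x ^ (2*N+1) * laplace_tail x (2*n) \<le> fact (2*n+1) * fact (2*N+1)"
    by (rule laplace_tail_bound[OF x]) (use n in simp)
  also have "\<dots> \<le> fact (2*N+1) ^ 2"
    unfolding power2_eq_square by (intro mult_right_mono fact_mono) (use n in auto)
  also have "\<dots> \<le> fact (2*N+1) ^ 2 * fact (2*N)"
    by (simp add: mult_le_cancel_left1)
  finally have "x * laplace_tail x (2*n) \<le> fact (2*N+1) ^ 2 * fact (2*N) / x ^ (2*N)"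
    using x by (simp add: field_simps)
  moreover have "\<bar>a gchoose n\<bar> \<le> fact N * \<bar>a gchoose N\<bar>"
    using gbinomial_abs_le_fact[OF aN] n by simp
  ultimately have "\<bar>a gchoose n\<bar> * (x * laplace_tail x (2*n))
      \<le> (fact N * \<bar>a gchoose N\<bar>) * (fact (2*N+1) ^ 2 * fact (2*N) / x ^ (2*N))"
    using laplace_tail_nonneg[OF x, of "2*n"] x by (intro mult_mono) auto
  then show ?thesis
    using laplace_tail_nonneg[OF x, of "2*n"] x by (simp add: abs_mult mult_ac)
qed

definition expansion_error_constant :: "nat \<Rightarrow> real" where
  "expansion_error_constant N = 1 + real N * fact N * fact (2*N+1) ^ 2"

text \<open>The asymptotic expansion of the weighted Laplace integral, with an error bound uniform in
  \<open>x > 0\<close>: the first omitted term bounds both the binomial remainder and the tail corrections.\<close>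

lemma weighted_laplace_expansion:
  fixes a x :: real
  assumes aN: "real N \<le> a" and a: "a > 0" and x: "x > 0"
  shows "\<bar>x * integral {0..1} (\<lambda>t. (1 - t\<^sup>2) powr a * exp (- x * t)) -
           (\<Sum>n<N. (-1) ^ n * (a gchoose n) * fact (2*n) / x ^ (2*n))\<bar>
         \<le> expansion_error_constant N * (\<bar>a gchoose N\<bar> * fact (2*N) / x ^ (2*N))"
proof -
  define J where "J = integral {0..1} (\<lambda>t. (1 - t\<^sup>2) powr a * exp (- x * t))"
  define c where "c = (\<lambda>n. (-1) ^ n * (a gchoose n))"
  define T where "T = \<bar>a gchoose N\<bar> * fact (2*N) / x ^ (2*N)"
  define D where "D = J - (\<Sum>n<N. c n * truncated_laplace x (2*n))"
  define tails where "tails = (\<Sum>n<N. c n * (x * laplace_tail x (2*n)))"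
  have "c n * fact (2*n) / x ^ (2*n) =
      x * (c n * truncated_laplace x (2*n)) + c n * (x * laplace_tail x (2*n))" for n
  proof -
    have "fact (2*n) / x ^ (2*n) = x * truncated_laplace x (2*n) + x * laplace_tail x (2*n)"
      using scaled_truncated_laplace[OF x, of "2*n"] by linarith
    then have "c n * (fact (2*n) / x ^ (2*n)) =
        x * (c n * truncated_laplace x (2*n)) + c n * (x * laplace_tail x (2*n))"
      by (simp only: distrib_left mult.left_commute)
    then show ?thesis by (simp only: times_divide_eq_right)
  qed
  then have split: "x * J - (\<Sum>n<N. c n * fact (2*n) / x ^ (2*n)) = x * D - tails"
    unfolding D_def tails_def by (simp add: sum.distrib right_diff_distrib sum_distrib_left)
  have "\<bar>x * D\<bar> \<le> x * (\<bar>a gchoose N\<bar> * truncated_laplace x (2*N))"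
    using weighted_laplace_binomial_approx[OF aN a x] x unfolding D_def J_def c_def
    by (simp add: abs_mult mult_left_mono)
  also have "\<dots> \<le> T"
    using mult_left_mono[OF scaled_truncated_laplace_le[OF x, of "2*N"], of "\<bar>a gchoose N\<bar>"]
    by (simp add: T_def mult_ac)
  finally have main_part: "\<bar>x * D\<bar> \<le> T" .
  have "\<bar>tails\<bar> \<le> (\<Sum>n<N. fact N * fact (2*N+1) ^ 2 * T)"
    using tail_correction_bound[OF aN _ x] unfolding tails_def c_def T_def
    by (intro order.trans[OF sum_abs sum_mono]) auto
  then have tail_part: "\<bar>tails\<bar> \<le> real N * fact N * fact (2*N+1) ^ 2 * T" by simp
  have "\<bar>x * J - (\<Sum>n<N. c n * fact (2*n) / x ^ (2*n))\<bar> \<le> expansion_error_constant N * T"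
    unfolding split expansion_error_constant_def
    using main_part tail_part abs_triangle_ineq4[of "x * D" tails] by (simp add: algebra_simps)
  then show ?thesis unfolding J_def c_def T_def .
qed

lemma phi_gbinomial:
  fixes \<nu> :: real
  assumes nu: "\<nu> > 0" and n: "real n < \<nu> + 1/2"
  shows "phi n \<nu> = fact n * ((\<nu> - 1/2) gchoose n) / \<nu> ^ (2*n)"
proof -
  have not_pole: "\<nu> - 1/2 + 1 \<notin> \<int>\<^sub>\<le>\<^sub>0" using nu by auto
  have shift: "\<nu> - 1/2 + 1 = \<nu> + 1/2" "\<nu> - 1/2 - real n + 1 = \<nu> - real n + 1/2" by simp_all
  have "((\<nu> - 1/2) gchoose n) = Gamma (\<nu> + 1/2) / (fact n * Gamma (\<nu> - real n + 1/2))"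
    using gbinomial_Gamma[OF not_pole, of n] unfolding shift .
  moreover have "Gamma (\<nu> - real n + 1/2) > 0" using n by simp
  ultimately show ?thesis unfolding phi_def using nu by (simp add: field_simps)
qed

definition struveM_prefactor :: "real \<Rightarrow> real \<Rightarrow> real" where
  "struveM_prefactor \<nu> lam = (lam * \<nu> / 2) powr (\<nu> - 1) / (sqrt pi * Gamma (\<nu> + 1/2))"

definition expansion_term :: "nat \<Rightarrow> real \<Rightarrow> real \<Rightarrow> real" where
  "expansion_term n \<nu> lam = (-1) ^ n * fact (2*n) / (fact n * lam ^ (2*n)) * phi n \<nu>"

lemma struveM_prefactor_pos:
  fixes \<nu> lam :: real assumes "\<nu> > 0" "lam > 0"
  shows "struveM_prefactor \<nu> lam > 0"
  using assms by (simp add: struveM_prefactor_def)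

lemma expansion_term_gbinomial:
  fixes \<nu> lam :: real
  assumes nu: "\<nu> > 0" and lam: "lam > 0" and n: "real n < \<nu> + 1/2"
  shows "expansion_term n \<nu> lam = (-1) ^ n * ((\<nu> - 1/2) gchoose n) * fact (2*n) / (lam * \<nu>) ^ (2*n)"
  unfolding expansion_term_def phi_gbinomial[OF nu n] using nu lam
  by (simp add: field_simps power_mult_distrib)

lemma expansion_term_nonzero:
  fixes \<nu> lam :: real
  assumes nu: "\<nu> > max 0 (2 * real N - 3/2)" and lam: "lam > 0"
  shows "expansion_term N \<nu> lam \<noteq> 0"
proof -
  have "Gamma (\<nu> - real N + 1/2) > 0"
    using nu by (cases N) auto
  moreover have "Gamma (\<nu> + 1/2) > 0" using nu by simp
  ultimately show ?thesis
    using nu lam unfolding expansion_term_def phi_def by (simp add: less_imp_neq[symmetric])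
qed

lemma struveM_normalised:
  fixes \<nu> lam :: real
  assumes nu: "\<nu> > 1/2" and lam: "lam > 0"
  shows "- struveM \<nu> (lam * \<nu>) / struveM_prefactor \<nu> lam =
    (lam * \<nu>) * integral {0..1} (\<lambda>t. (1 - t\<^sup>2) powr (\<nu> - 1/2) * exp (- (lam * \<nu>) * t))"
proof -
  define x where "x = lam * \<nu>"
  have x: "x > 0" using nu lam by (simp add: x_def)
  have "(x/2) powr \<nu> = (x/2) powr (\<nu> - 1) * (x/2)"
    using x powr_add[of "x/2" "\<nu> - 1" 1] by simp
  then have "poisson_factor \<nu> x = x * struveM_prefactor \<nu> lam"
    unfolding poisson_factor_def struveM_prefactor_def x_def[symmetric] by (simp add: field_simps)
  moreover have "struveM_prefactor \<nu> lam > 0"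
    using nu lam by (intro struveM_prefactor_pos) auto
  ultimately show ?thesis
    unfolding x_def[symmetric] struveM_laplace_integral[OF nu x] by simp
qed

lemma struveM_expansion_remainder:
  fixes \<nu> lam :: real
  assumes nu: "\<nu> > 1/2" and N: "real N \<le> \<nu> - 1/2" and lam: "lam > 0"
  shows "\<bar>- struveM \<nu> (lam * \<nu>) / struveM_prefactor \<nu> lam - (\<Sum>n<N. expansion_term n \<nu> lam)\<bar>
           \<le> expansion_error_constant N * \<bar>expansion_term N \<nu> lam\<bar>"
proof -
  have x: "lam * \<nu> > 0" using nu lam by simp
  have terms: "expansion_term n \<nu> lam =
      (-1) ^ n * ((\<nu> - 1/2) gchoose n) * fact (2*n) / (lam * \<nu>) ^ (2*n)" if "n \<le> N" for n
    by (rule expansion_term_gbinomial) (use nu lam N that in auto)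
  have "(\<Sum>n<N. expansion_term n \<nu> lam) =
      (\<Sum>n<N. (-1) ^ n * ((\<nu> - 1/2) gchoose n) * fact (2*n) / (lam * \<nu>) ^ (2*n))"
    by (intro sum.cong refl terms) simp
  moreover have "\<bar>expansion_term N \<nu> lam\<bar> =
      \<bar>(\<nu> - 1/2) gchoose N\<bar> * fact (2*N) / (lam * \<nu>) ^ (2*N)"
    using x by (simp add: terms abs_mult)
  ultimately show ?thesis
    using weighted_laplace_expansion[OF N _ x] nu unfolding struveM_normalised[OF nu lam] by simp
qed

theorem mainTheorem13:
  fixes N :: nat
  shows "\<exists>E :: real \<Rightarrow> real \<Rightarrow> real.
    (\<forall>\<nu> lam. \<nu> > max 0 (2 * real N - 3/2) \<and> lam > 0 \<longrightarrow>
       struveM \<nu> (lam * \<nu>) =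
         - ((lam * \<nu> / 2) powr (\<nu> - 1) / (sqrt pi * Gamma (\<nu> + 1/2))) *
           ((\<Sum>n<N. (-1) ^ n * fact (2*n) / (fact n * lam ^ (2*n)) * phi n \<nu>)
            + (-1) ^ N * fact (2*N) / (fact N * lam ^ (2*N)) * phi N \<nu> * E \<nu> lam))
    \<and> (\<exists>C \<nu>0. \<forall>\<nu> \<ge> \<nu>0. \<forall>lam > 0. \<bar>E \<nu> lam\<bar> \<le> C)"
proof -
  text \<open>The error function is determined by the identity; the remainder estimate bounds it.\<close>
  define E where "E = (\<lambda>\<nu> lam. (- struveM \<nu> (lam * \<nu>) / struveM_prefactor \<nu> lam
      - (\<Sum>n<N. expansion_term n \<nu> lam)) / expansion_term N \<nu> lam)"
  have identity: "struveM \<nu> (lam * \<nu>) = - struveM_prefactor \<nu> lam *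
      ((\<Sum>n<N. expansion_term n \<nu> lam) + expansion_term N \<nu> lam * E \<nu> lam)"
    if "\<nu> > max 0 (2 * real N - 3/2)" "lam > 0" for \<nu> lam
    using expansion_term_nonzero[OF that] struveM_prefactor_pos[of \<nu> lam] that
    by (simp add: E_def field_simps)
  have bounded: "\<bar>E \<nu> lam\<bar> \<le> expansion_error_constant N"
    if "\<nu> \<ge> real N + 1" "lam > 0" for \<nu> lam
    using struveM_expansion_remainder[of \<nu> N lam] that
      expansion_error_constant_def[of N]
    by (cases "expansion_term N \<nu> lam = 0") (auto simp: E_def abs_divide divide_le_eq)
  show ?thesis
    using identity bounded unfolding struveM_prefactor_def expansion_term_def
    by (intro exI[of _ E] conjI) blast+
qed

end
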